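(* Let $d\ge3$, let $I\subset\mathbb{R}$ be an open interval and $V\subset\mathbb{R}^{d-1}$ an open connected set, and let $\psi\in C^\infty(I\times V)$ satisfy $\mathrm{rank}\,\nabla^2_y\partial_t\psi(t;y)=d-1$ for all $(t,y)\in I\times V$. If $c\in C^\infty(I\times V)$ satisfies $\partial_t^2\nabla_y^2\psi(t;y)=c(t;y)\,\partial_t\nabla^2_y\psi(t;y)$ on $I\times V$, then $c(t;y)$ does not depend on $y$, i.e. $c(t;y)=c(t)$ for some function $c$ on $I$.
   Context: $\nabla^2_y$ denotes the Hessian in the variables $y\in\mathbb{R}^{d-1}$. *)

theory Defs
  imports "HOL-Analysis.Analysis"
begin

definition partial :: "('a::real_normed_vector \<Rightarrow> real) \<Rightarrow> 'a \<Rightarrow> 'a \<Rightarrow> real" where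
  "partial f v = (\<lambda>x. frechet_derivative f (at x) v)"

text \<open>Iterated partial derivative: the last list element is applied first.\<close>
fun iterated_partial :: "('a::real_normed_vector \<Rightarrow> real) \<Rightarrow> 'a list \<Rightarrow> 'a \<Rightarrow> real" where
  "iterated_partial f [] = f"
| "iterated_partial f (v # vs) = partial (iterated_partial f vs) v"

definition smooth_on :: "'a::euclidean_space set \<Rightarrow> ('a \<Rightarrow> real) \<Rightarrow> bool" where
  "smooth_on S f \<longleftrightarrow> (\<forall>vs. set vs \<subseteq> Basis \<longrightarrow> iterated_partial f vs differentiable_on S)"

text \<open>Variables (t;y) with t real and y in R^(d-1) = real^'n.
  The time direction and the y_i directions.\<close>
definition dir_t :: "real \<times> (real^'n)" where "dir_t = (1, 0)"
definition dir_y :: "'n \<Rightarrow> real \<times> (real^'n)" where "dir_y i = (0, axis i 1)"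

definition hess_y_dt :: "(real \<times> (real^'n) \<Rightarrow> real) \<Rightarrow> real \<times> (real^'n) \<Rightarrow> real^'n^'n" where
  "hess_y_dt psi z = (\<chi> i j. iterated_partial psi [dir_y i, dir_y j, dir_t] z)"

definition hess_y_dtt :: "(real \<times> (real^'n) \<Rightarrow> real) \<Rightarrow> real \<times> (real^'n) \<Rightarrow> real^'n^'n" where
  "hess_y_dtt psi z = (\<chi> i j. iterated_partial psi [dir_t, dir_t, dir_y i, dir_y j] z)"

end

theory Submission
  imports Defs
begin

text \<open>Differentiate \<open>\<partial>\<^sub>t\<^sup>2\<nabla>\<^sub>y\<^sup>2\<psi> = c \<partial>\<^sub>t\<nabla>\<^sub>y\<^sup>2\<psi>\<close> in the direction \<open>y\<^sub>k\<close>. By the symmetry of mixed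
  partial derivatives the fourth-order terms coincide after exchanging \<open>j\<close> and \<open>k\<close>, which
  leaves \<open>\<partial>\<^sub>k c \<cdot> H\<^sub>i\<^sub>j = \<partial>\<^sub>j c \<cdot> H\<^sub>i\<^sub>k\<close> for \<open>H = \<nabla>\<^sub>y\<^sup>2\<partial>\<^sub>t\<psi>\<close>. Hence \<open>\<partial>\<^sub>k c e\<^sub>j - \<partial>\<^sub>j c e\<^sub>k\<close> lies in the
  kernel of the nonsingular matrix \<open>H\<close>, and taking \<open>j \<noteq> k\<close> (possible as \<open>d - 1 \<ge> 2\<close>) gives
  \<open>\<nabla>\<^sub>y c = 0\<close>. So \<open>c\<close> is constant in \<open>y\<close> on the connected set \<open>V\<close>, for each \<open>t\<close> separately;
  nothing about \<open>I\<close> beyond openness is used.\<close>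

lemma partial_along_line:
  fixes f :: "'a::real_normed_vector \<Rightarrow> real"
  assumes "f differentiable (at (p + s *\<^sub>R u))"
  shows "((\<lambda>s. f (p + s *\<^sub>R u)) has_real_derivative partial f u (p + s *\<^sub>R u)) (at s)"
proof -
  let ?D = "frechet_derivative f (at (p + s *\<^sub>R u))"
  have fD: "(f has_derivative ?D) (at (p + s *\<^sub>R u))"
    using assms frechet_derivative_works by blast
  have line: "((\<lambda>s. p + s *\<^sub>R u) has_derivative (\<lambda>s. s *\<^sub>R u)) (at s)"
    by (auto intro!: derivative_eq_intros)
  have "((\<lambda>s. f (p + s *\<^sub>R u)) has_derivative (\<lambda>s. ?D (s *\<^sub>R u))) (at s)"
    using has_derivative_compose[OF line fD] by (simp add: o_def)
  moreover have "(\<lambda>s. ?D (s *\<^sub>R u)) = (*) (partial f u (p + s *\<^sub>R u))"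
    using linear_simps(5)[OF has_derivative_bounded_linear[OF fD]]
    by (auto simp: partial_def fun_eq_iff)
  ultimately show ?thesis by (simp add: has_field_derivative_def)
qed

lemma mixed_difference_mvt:
  fixes f :: "'a::real_normed_vector \<Rightarrow> real"
  assumes h: "0 < h"
    and fd: "\<And>s t. 0 \<le> s \<Longrightarrow> s \<le> h \<Longrightarrow> 0 \<le> t \<Longrightarrow> t \<le> h \<Longrightarrow>
               f differentiable (at (a + s *\<^sub>R u + t *\<^sub>R v))"
  obtains z where "0 < z" "z < h"
    "f (a + h *\<^sub>R u + h *\<^sub>R v) - f (a + h *\<^sub>R u) - f (a + h *\<^sub>R v) + f a =
       h * (partial f u (a + h *\<^sub>R v + z *\<^sub>R u) - partial f u (a + z *\<^sub>R u))"
proof -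
  define g where "g s = f (a + h *\<^sub>R v + s *\<^sub>R u) - f (a + s *\<^sub>R u)" for s
  have "(g has_real_derivative partial f u (a + h *\<^sub>R v + s *\<^sub>R u) - partial f u (a + s *\<^sub>R u)) (at s)"
    if "0 \<le> s" "s \<le> h" for s
    unfolding g_def[abs_def]
  proof (intro DERIV_diff partial_along_line)
    show "f differentiable (at (a + h *\<^sub>R v + s *\<^sub>R u))"
      using fd[of s h] that h by (simp add: ac_simps)
    show "f differentiable (at (a + s *\<^sub>R u))"
      using fd[of s 0] that h by simp
  qed
  from MVT2[OF h this] obtain z where "0 < z" "z < h"
    "g h - g 0 = h * (partial f u (a + h *\<^sub>R v + z *\<^sub>R u) - partial f u (a + z *\<^sub>R u))"
    by auto
  then show ?thesis
    using that by (simp add: g_def algebra_simps)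
qed

lemma has_derivative_difference_bound:
  fixes g :: "'a::real_normed_vector \<Rightarrow> real"
  assumes gL: "(g has_derivative L) (at a)" and e: "e > 0"
  obtains d where "d > 0" "\<And>y1 y2. norm y1 < d \<Longrightarrow> norm y2 < d \<Longrightarrow>
    \<bar>g (a + y1) - g (a + y2) - L (y1 - y2)\<bar> \<le> e * (norm y1 + norm y2)"
proof -
  obtain d where d: "d > 0"
    "\<And>y. norm (y - a) < d \<Longrightarrow> norm (g y - g a - L (y - a)) \<le> e * norm (y - a)"
    using gL e unfolding has_derivative_at_alt by blast
  have approx: "\<bar>g (a + y) - g a - L y\<bar> \<le> e * norm y" if "norm y < d" for y
    using d(2)[of "a + y"] that by simp
  show ?thesis
  proof (rule that[OF d(1)])
    fix y1 y2 :: 'a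
    assume "norm y1 < d" "norm y2 < d"
    then have "\<bar>g (a + y1) - g a - L y1\<bar> \<le> e * norm y1" "\<bar>g (a + y2) - g a - L y2\<bar> \<le> e * norm y2"
      using approx by blast+
    moreover have "L (y1 - y2) = L y1 - L y2"
      using gL has_derivative_linear linear_diff by blast
    ultimately show "\<bar>g (a + y1) - g (a + y2) - L (y1 - y2)\<bar> \<le> e * (norm y1 + norm y2)"
      by (simp add: distrib_left abs_le_iff)
  qed
qed

lemma norm_scaled_pair_le:
  fixes u v :: "'a::real_normed_vector"
  assumes "0 \<le> s" "s \<le> h" "0 \<le> t" "t \<le> h"
  shows "norm (s *\<^sub>R u + t *\<^sub>R v) \<le> h * (norm u + norm v)"
proof -
  have "norm (s *\<^sub>R u + t *\<^sub>R v) \<le> s * norm u + t * norm v"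
    using norm_triangle_ineq[of "s *\<^sub>R u" "t *\<^sub>R v"] assms by simp
  also have "\<dots> \<le> h * norm u + h * norm v"
    using assms by (intro add_mono mult_right_mono) auto
  finally show ?thesis
    by (simp add: distrib_left)
qed

lemma mixed_difference_mvt_near:
  fixes f :: "'a::real_normed_vector \<Rightarrow> real"
  assumes S: "open S" "a \<in> S"
    and fd: "\<And>y. y \<in> S \<Longrightarrow> f differentiable (at y)"
  obtains d where "d > 0" "\<And>h. 0 < h \<Longrightarrow> h < d \<Longrightarrow> \<exists>z. 0 < z \<and> z < h \<and>
    f (a + h *\<^sub>R u + h *\<^sub>R v) - f (a + h *\<^sub>R u) - f (a + h *\<^sub>R v) + f a =
      h * (partial f u (a + h *\<^sub>R v + z *\<^sub>R u) - partial f u (a + z *\<^sub>R u))"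
proof -
  obtain r where r: "r > 0" "ball a r \<subseteq> S"
    using S openE by blast
  define K where "K = norm u + norm v + 1"
  have K: "K > 0"
    by (simp add: K_def add_nonneg_pos)
  show ?thesis
  proof (rule that[of "r / K"])
    show "r / K > 0"
      using r K by simp
    fix h :: real
    assume h: "0 < h" "h < r / K"
    have "f differentiable (at (a + s *\<^sub>R u + t *\<^sub>R v))"
      if "0 \<le> s" "s \<le> h" "0 \<le> t" "t \<le> h" for s t
    proof (rule fd)
      have "h * (norm u + norm v) \<le> h * K"
        using h by (simp add: K_def)
      also have "\<dots> < r"
        using h K by (simp add: pos_less_divide_eq mult.commute)
      finally have "dist a (a + s *\<^sub>R u + t *\<^sub>R v) < r"
        using norm_scaled_pair_le[OF that, of u v]
        by (simp add: dist_norm add.assoc norm_minus_commute add.commute)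
      then show "a + s *\<^sub>R u + t *\<^sub>R v \<in> S"
        using r by auto
    qed
    from mixed_difference_mvt[OF h(1) this] show "\<exists>z. 0 < z \<and> z < h \<and>
      f (a + h *\<^sub>R u + h *\<^sub>R v) - f (a + h *\<^sub>R u) - f (a + h *\<^sub>R v) + f a =
        h * (partial f u (a + h *\<^sub>R v + z *\<^sub>R u) - partial f u (a + z *\<^sub>R u))"
      by blast
  qed
qed

lemma mixed_difference_approx:
  fixes f :: "'a::real_normed_vector \<Rightarrow> real"
  assumes S: "open S" "a \<in> S"
    and fd: "\<And>y. y \<in> S \<Longrightarrow> f differentiable (at y)"
    and gd: "partial f u differentiable (at a)"
    and e: "e > 0"
  obtains d where "d > 0" "\<And>h. 0 < h \<Longrightarrow> h < d \<Longrightarrow>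
     \<bar>f (a + h *\<^sub>R u + h *\<^sub>R v) - f (a + h *\<^sub>R u) - f (a + h *\<^sub>R v) + f a
        - h\<^sup>2 * partial (partial f u) v a\<bar> \<le> e * h\<^sup>2 * (2 * norm u + norm v)"
proof -
  define g where "g = partial f u"
  define L where "L = frechet_derivative g (at a)"
  have gL: "(g has_derivative L) (at a)"
    using gd frechet_derivative_works unfolding g_def L_def by blast
  obtain d1 where d1: "d1 > 0" "\<And>h. 0 < h \<Longrightarrow> h < d1 \<Longrightarrow> \<exists>z. 0 < z \<and> z < h \<and>
    f (a + h *\<^sub>R u + h *\<^sub>R v) - f (a + h *\<^sub>R u) - f (a + h *\<^sub>R v) + f a =
      h * (g (a + h *\<^sub>R v + z *\<^sub>R u) - g (a + z *\<^sub>R u))"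
    using mixed_difference_mvt_near[OF S fd] unfolding g_def by blast
  obtain d2 where d2: "d2 > 0" "\<And>y1 y2. norm y1 < d2 \<Longrightarrow> norm y2 < d2 \<Longrightarrow>
      \<bar>g (a + y1) - g (a + y2) - L (y1 - y2)\<bar> \<le> e * (norm y1 + norm y2)"
    using has_derivative_difference_bound[OF gL e] by blast
  define K where "K = norm u + norm v + 1"
  have K: "K > 0"
    by (simp add: K_def add_nonneg_pos)
  show ?thesis
  proof (rule that[of "min d1 (d2 / K)"])
    show "min d1 (d2 / K) > 0"
      using d1 d2 K by simp
    fix h :: real
    assume h: "0 < h" "h < min d1 (d2 / K)"
    have "h * (norm u + norm v) \<le> h * K"
      using h by (simp add: K_def)
    also have "\<dots> < d2"
      using h K by (simp add: pos_less_divide_eq mult.commute)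
    finally have small: "h * (norm u + norm v) < d2" .
    obtain z where z: "0 < z" "z < h"
      and mvt: "f (a + h *\<^sub>R u + h *\<^sub>R v) - f (a + h *\<^sub>R u) - f (a + h *\<^sub>R v) + f a =
        h * (g (a + h *\<^sub>R v + z *\<^sub>R u) - g (a + z *\<^sub>R u))"
      using d1(2)[of h] h by auto
    have n1: "norm (z *\<^sub>R u + h *\<^sub>R v) \<le> h * (norm u + norm v)"
      using norm_scaled_pair_le[of z h h] z h by simp
    have n2: "norm (z *\<^sub>R u) \<le> h * norm u"
      using z by (simp add: mult_right_mono)
    have "\<bar>g (a + (z *\<^sub>R u + h *\<^sub>R v)) - g (a + z *\<^sub>R u) - L (z *\<^sub>R u + h *\<^sub>R v - z *\<^sub>R u)\<bar>
        \<le> e * (norm (z *\<^sub>R u + h *\<^sub>R v) + norm (z *\<^sub>R u))"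
    proof (rule d2(2))
      have "h * norm u \<le> h * (norm u + norm v)"
        using h by (simp add: mult_left_mono)
      then show "norm (z *\<^sub>R u + h *\<^sub>R v) < d2" "norm (z *\<^sub>R u) < d2"
        using n1 n2 small by linarith+
    qed
    also have "\<dots> \<le> e * (h * (norm u + norm v) + h * norm u)"
      using n1 n2 e by (intro mult_left_mono) auto
    also have "\<dots> = e * h * (2 * norm u + norm v)"
      by (simp add: algebra_simps)
    also have "L (z *\<^sub>R u + h *\<^sub>R v - z *\<^sub>R u) = h * L v"
      using gL has_derivative_linear linear_scale by fastforce
    finally have bound: "\<bar>g (a + h *\<^sub>R v + z *\<^sub>R u) - g (a + z *\<^sub>R u) - h * L v\<bar>
        \<le> e * h * (2 * norm u + norm v)"
      by (simp add: ac_simps)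
    have "partial (partial f u) v a = L v"
      by (simp add: partial_def L_def g_def)
    then have "\<bar>f (a + h *\<^sub>R u + h *\<^sub>R v) - f (a + h *\<^sub>R u) - f (a + h *\<^sub>R v) + f a
        - h\<^sup>2 * partial (partial f u) v a\<bar>
        = h * \<bar>g (a + h *\<^sub>R v + z *\<^sub>R u) - g (a + z *\<^sub>R u) - h * L v\<bar>"
      using h by (simp add: mvt power2_eq_square abs_mult right_diff_distrib[symmetric] mult.assoc)
    also have "\<dots> \<le> h * (e * h * (2 * norm u + norm v))"
      using bound h by simp
    finally show "\<bar>f (a + h *\<^sub>R u + h *\<^sub>R v) - f (a + h *\<^sub>R u) - f (a + h *\<^sub>R v) + f a
        - h\<^sup>2 * partial (partial f u) v a\<bar> \<le> e * h\<^sup>2 * (2 * norm u + norm v)"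
      by (simp add: power2_eq_square mult_ac)
  qed
qed

text \<open>Schwarz's theorem in the version needing only differentiability of the first partials at
  \<open>a\<close>: both mixed second derivatives are the limit of the same mixed second difference over \<open>h\<^sup>2\<close>.\<close>

lemma partial_commute:
  fixes f :: "'a::real_normed_vector \<Rightarrow> real"
  assumes S: "open S" "a \<in> S"
    and fd: "\<And>y. y \<in> S \<Longrightarrow> f differentiable (at y)"
    and gu: "partial f u differentiable (at a)"
    and gv: "partial f v differentiable (at a)"
  shows "partial (partial f u) v a = partial (partial f v) u a"
proof (rule ccontr)
  define A where "A = partial (partial f u) v a"
  define B where "B = partial (partial f v) u a"
  define K where "K = 3 * norm u + 3 * norm v + 1"
  define e where "e = \<bar>A - B\<bar> / (2 * K)"
  assume "A \<noteq> B"
  then have K: "K > 0" and e: "e > 0"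
    by (simp_all add: K_def e_def add_nonneg_pos)
  obtain d1 where d1: "d1 > 0" "\<And>h. 0 < h \<Longrightarrow> h < d1 \<Longrightarrow>
     \<bar>f (a + h *\<^sub>R u + h *\<^sub>R v) - f (a + h *\<^sub>R u) - f (a + h *\<^sub>R v) + f a - h\<^sup>2 * A\<bar>
       \<le> e * h\<^sup>2 * (2 * norm u + norm v)"
    using mixed_difference_approx[OF S fd gu e] unfolding A_def by blast
  obtain d2 where d2: "d2 > 0" "\<And>h. 0 < h \<Longrightarrow> h < d2 \<Longrightarrow>
     \<bar>f (a + h *\<^sub>R v + h *\<^sub>R u) - f (a + h *\<^sub>R v) - f (a + h *\<^sub>R u) + f a - h\<^sup>2 * B\<bar>
       \<le> e * h\<^sup>2 * (2 * norm v + norm u)"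
    using mixed_difference_approx[OF S fd gv e] unfolding B_def by blast
  define h where "h = min d1 d2 / 2"
  have h: "0 < h" "h < d1" "h < d2"
    using d1 d2 by (auto simp: h_def)
  define X where "X = f (a + h *\<^sub>R u + h *\<^sub>R v) - f (a + h *\<^sub>R u) - f (a + h *\<^sub>R v) + f a"
  have XA: "\<bar>X - h\<^sup>2 * A\<bar> \<le> e * h\<^sup>2 * (2 * norm u + norm v)"
    using d1(2)[OF h(1,2)] by (simp add: X_def)
  have XB: "\<bar>X - h\<^sup>2 * B\<bar> \<le> e * h\<^sup>2 * (2 * norm v + norm u)"
    using d2(2)[OF h(1,3)] by (simp add: X_def algebra_simps)
  have "h\<^sup>2 * \<bar>A - B\<bar> = \<bar>(X - h\<^sup>2 * B) - (X - h\<^sup>2 * A)\<bar>"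
    by (simp add: abs_mult left_diff_distrib[symmetric] mult.commute)
  also have "\<dots> \<le> e * h\<^sup>2 * (K - 1)"
    using XA XB by (simp add: K_def algebra_simps)
  also have "\<dots> < e * h\<^sup>2 * (2 * K)"
    using e h K by (intro mult_strict_left_mono) auto
  also have "\<dots> = h\<^sup>2 * \<bar>A - B\<bar>"
    using K by (simp add: e_def)
  finally show False
    by simp
qed

lemma partial_cong_open:
  assumes "open S" "\<And>z. z \<in> S \<Longrightarrow> f z = g z" "x \<in> S"
  shows "partial f v x = partial g v x"
proof -
  have "(f has_derivative D) (at x) \<longleftrightarrow> (g has_derivative D) (at x)" for D
    using has_derivative_transform_within_open[of f D x UNIV S g]
      has_derivative_transform_within_open[of g D x UNIV S f] assms by auto
  then show ?thesis
    by (simp add: partial_def frechet_derivative_def)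
qed

lemma partial_mult:
  fixes f g :: "'a::real_normed_vector \<Rightarrow> real"
  assumes "f differentiable (at x)" "g differentiable (at x)"
  shows "partial (\<lambda>z. f z * g z) v x = partial f v x * g x + f x * partial g v x"
proof -
  have "((\<lambda>z. f z * g z) has_derivative
      (\<lambda>h. f x * frechet_derivative g (at x) h + frechet_derivative f (at x) h * g x)) (at x)"
    using assms by (intro has_derivative_mult) (simp_all add: frechet_derivative_works[symmetric])
  from frechet_derivative_at[OF this] show ?thesis
    by (simp add: partial_def add.commute fun_eq_iff)
qed

lemma smooth_on_iterated_partial_differentiable:
  assumes "smooth_on S f" "open S" "set vs \<subseteq> Basis" "z \<in> S"
  shows "iterated_partial f vs differentiable (at z)"
  using assms differentiable_on_eq_differentiable_at unfolding smooth_on_def by blast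

context
  fixes S and f :: "'a::euclidean_space \<Rightarrow> real"
  assumes smooth: "smooth_on S f" and S: "open S"
begin

lemma iterated_partial_swap:
  assumes "u \<in> Basis" "v \<in> Basis" "set vs \<subseteq> Basis" "z \<in> S"
  shows "iterated_partial f (u # v # vs) z = iterated_partial f (v # u # vs) z"
proof -
  have "iterated_partial f ws differentiable (at w)" if "set ws \<subseteq> Basis" "w \<in> S" for ws w
    using smooth_on_iterated_partial_differentiable[OF smooth S that] .
  then show ?thesis
    using partial_commute[OF S \<open>z \<in> S\<close>, of "iterated_partial f vs" v u] assms
    by (metis insert_subset iterated_partial.simps(2) list.simps(15))
qed

lemma iterated_partial_move_front:
  assumes "set (ys @ x # zs) \<subseteq> Basis" "z \<in> S"
  shows "iterated_partial f (ys @ x # zs) z = iterated_partial f (x # ys @ zs) z"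
  using assms
proof (induction ys arbitrary: z)
  case (Cons y ys)
  have "iterated_partial f (y # ys @ x # zs) z = iterated_partial f (y # x # ys @ zs) z"
    using partial_cong_open[OF S Cons.IH] Cons.prems by simp
  also have "\<dots> = iterated_partial f (x # y # ys @ zs) z"
    using iterated_partial_swap Cons.prems by simp
  finally show ?case
    by simp
qed simp

lemma iterated_partial_mset_eq:
  assumes "mset xs = mset ys" "set xs \<subseteq> Basis" "z \<in> S"
  shows "iterated_partial f xs z = iterated_partial f ys z"
  using assms
proof (induction xs arbitrary: ys z)
  case Nil
  then show ?case
    by simp
next
  case (Cons x xs)
  obtain ys1 ys2 where ys: "ys = ys1 @ x # ys2"
    using Cons.prems(1) by (metis list.set_intros(1) mset_eq_setD split_list)
  have IH: "iterated_partial f xs w = iterated_partial f (ys1 @ ys2) w" if "w \<in> S" for w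
    using Cons.IH[of "ys1 @ ys2" w] Cons.prems(1,2) that ys by simp
  have "set ys \<subseteq> Basis"
    using Cons.prems(1,2) mset_eq_setD by metis
  then have "iterated_partial f ys z = iterated_partial f (x # ys1 @ ys2) z"
    using iterated_partial_move_front Cons.prems(3) ys by simp
  also have "\<dots> = iterated_partial f (x # xs) z"
    using partial_cong_open[OF S IH Cons.prems(3)] by simp
  finally show ?case
    by simp
qed


lemma coefficient_partials_symmetric:
  assumes basis: "t \<in> Basis" "u \<in> Basis" "v \<in> Basis" "w \<in> Basis"
    and c: "\<And>z. z \<in> S \<Longrightarrow> c differentiable (at z)"
    and eq_v: "\<And>z. z \<in> S \<Longrightarrow> iterated_partial f [t, t, u, v] z = c z * iterated_partial f [u, v, t] z"
    and eq_w: "\<And>z. z \<in> S \<Longrightarrow> iterated_partial f [t, t, u, w] z = c z * iterated_partial f [u, w, t] z"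
    and z: "z \<in> S"
  shows "partial c w z * iterated_partial f [u, v, t] z = partial c v z * iterated_partial f [u, w, t] z"
proof -
  have diff: "iterated_partial f vs differentiable (at z)" if "set vs \<subseteq> Basis" for vs
    using smooth_on_iterated_partial_differentiable[OF smooth S that z] .
  have "partial (iterated_partial f [t, t, u, v]) w z
      = partial (\<lambda>z. c z * iterated_partial f [u, v, t] z) w z"
    by (rule partial_cong_open[OF S eq_v z])
  then have "iterated_partial f [w, t, t, u, v] z =
      partial c w z * iterated_partial f [u, v, t] z + c z * iterated_partial f [w, u, v, t] z"
    using partial_mult[OF c[OF z] diff[of "[u, v, t]"]] basis by simp
  moreover have "partial (iterated_partial f [t, t, u, w]) v z
      = partial (\<lambda>z. c z * iterated_partial f [u, w, t] z) v z"
    by (rule partial_cong_open[OF S eq_w z])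
  then have "iterated_partial f [v, t, t, u, w] z =
      partial c v z * iterated_partial f [u, w, t] z + c z * iterated_partial f [v, u, w, t] z"
    using partial_mult[OF c[OF z] diff[of "[u, w, t]"]] basis by simp
  moreover have "iterated_partial f [w, t, t, u, v] z = iterated_partial f [v, t, t, u, w] z"
    and "iterated_partial f [w, u, v, t] z = iterated_partial f [v, u, w, t] z"
    by (rule iterated_partial_mset_eq; use basis z in \<open>simp add: add_mset_commute\<close>)+
  ultimately show ?thesis
    by (metis add_right_cancel)
qed

end

lemma full_rank_proportional_columns_zero:
  fixes M :: "real^'n^'m" and a :: "'n \<Rightarrow> real"
  assumes rank: "rank M = CARD('n)" and two: "CARD('n) \<ge> 2"
    and proportional: "\<And>i j k. a k * M $ i $ j = a j * M $ i $ k"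
  shows "a k = 0"
proof -
  obtain j :: 'n where "j \<noteq> k"
  proof -
    have "card (UNIV - {k}) > 0"
      using two by (simp add: card_Diff_singleton)
    then show ?thesis
      using that unfolding card_gt_0_iff by blast
  qed
  define x where "x = a k *\<^sub>R axis j 1 - a j *\<^sub>R (axis k 1 :: real^'n)"
  have "M *v x = a k *\<^sub>R column j M - a j *\<^sub>R column k M"
    by (simp add: x_def matrix_vector_mult_diff_distrib matrix_vector_mult_scaleR
        matrix_vector_mult_basis)
  also have "\<dots> = 0"
    by (simp add: vec_eq_iff column_def proportional)
  finally have "x = 0"
    using rank matrix_nonfull_linear_equations_eq[of M] by blast
  then have "x $ j = 0"
    by simp
  then show ?thesis
    using \<open>j \<noteq> k\<close> by (simp add: x_def axis_def)
qed

lemma eq_if_snd_partials_zero: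
  fixes f :: "'a::real_normed_vector \<times> 'b::euclidean_space \<Rightarrow> real"
  assumes V: "open V" "connected V"
    and diff: "\<And>y. y \<in> V \<Longrightarrow> f differentiable (at (x, y))"
    and zero: "\<And>y b. y \<in> V \<Longrightarrow> b \<in> Basis \<Longrightarrow> partial f (0, b) (x, y) = 0"
    and y: "y \<in> V" "y' \<in> V"
  shows "f (x, y) = f (x, y')"
proof (rule has_derivative_zero_unique_connected[OF V, where f = "\<lambda>y. f (x, y)"])
  fix w assume w: "w \<in> V"
  define D where "D = frechet_derivative f (at (x, w))"
  have fD: "(f has_derivative D) (at (x, w))"
    using diff[OF w] frechet_derivative_works D_def by blast
  have "((\<lambda>y. (x, y)) has_derivative (\<lambda>h. (0, h))) (at w)"
    by (auto intro!: derivative_eq_intros)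
  from has_derivative_compose[OF this fD]
  have "((\<lambda>y. f (x, y)) has_derivative (\<lambda>h. D (0, h))) (at w)"
    by (simp add: o_def)
  moreover have "D (0, h) = 0" for h
  proof -
    interpret D: linear D
      using fD has_derivative_linear by blast
    have "D (0, h) = (\<Sum>b\<in>Basis. (h \<bullet> b) * D (0, b))"
      using D.sum[of "\<lambda>b. (0, (h \<bullet> b) *\<^sub>R b)" Basis] D.scale[of _ "(0, _)"]
      by (simp add: sum_prod euclidean_representation)
    also have "\<dots> = 0"
      using zero[OF w] by (simp add: D_def partial_def)
    finally show ?thesis .
  qed
  ultimately show "((\<lambda>y. f (x, y)) has_derivative (\<lambda>h. 0)) (at w)"
    by simp
qed (use y in auto)


lemma dir_t_in_Basis: "(dir_t :: real \<times> (real^'n)) \<in> Basis"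
  by (simp add: dir_t_def Basis_prod_def)

lemma dir_y_in_Basis: "(dir_y i :: real \<times> (real^'n)) \<in> Basis"
  by (force simp: dir_y_def Basis_prod_def Basis_vec_def)

lemma eq_if_dir_y_partials_zero:
  fixes f :: "real \<times> (real^'n) \<Rightarrow> real"
  assumes V: "open V" "connected V"
    and diff: "\<And>y. y \<in> V \<Longrightarrow> f differentiable (at (t, y))"
    and zero: "\<And>y i. y \<in> V \<Longrightarrow> partial f (dir_y i) (t, y) = 0"
    and y: "y \<in> V" "y' \<in> V"
  shows "f (t, y) = f (t, y')"
proof (rule eq_if_snd_partials_zero[OF V diff _ y])
  fix w and b :: "real^'n"
  assume "w \<in> V" "b \<in> Basis"
  then obtain i where "(0, b) = dir_y i"
    by (auto simp: Basis_vec_def dir_y_def)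
  then show "partial f (0, b) (t, w) = 0"
    using zero[OF \<open>w \<in> V\<close>] by simp
qed

theorem corollary4p2:
  fixes I :: "real set" and V :: "(real^'n) set"
    and psi c :: "real \<times> (real^'n) \<Rightarrow> real"
  assumes d: "CARD('n) \<ge> 2"
    and I: "open I" "is_interval I"
    and V: "open V" "connected V"
    and psi_smooth: "smooth_on (I \<times> V) psi"
    and rank: "\<And>t y. t \<in> I \<Longrightarrow> y \<in> V \<Longrightarrow> rank (hess_y_dt psi (t, y)) = CARD('n)"
    and c_smooth: "smooth_on (I \<times> V) c"
    and eq: "\<And>t y. t \<in> I \<Longrightarrow> y \<in> V \<Longrightarrow>
               hess_y_dtt psi (t, y) = c (t, y) *\<^sub>R hess_y_dt psi (t, y)"
  shows "\<exists>g :: real \<Rightarrow> real. \<forall>t\<in>I. \<forall>y\<in>V. c (t, y) = g t"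
proof -
  have S: "open (I \<times> V)"
    using I V by (simp add: open_Times)
  have c_diff: "c differentiable (at z)" if "z \<in> I \<times> V" for z
    using smooth_on_iterated_partial_differentiable[OF c_smooth S, of "[]"] that by simp
  have eq_partials: "iterated_partial psi [dir_t, dir_t, dir_y i, dir_y j] z =
      c z * iterated_partial psi [dir_y i, dir_y j, dir_t] z" if "z \<in> I \<times> V" for i j z
    using eq[of "fst z" "snd z"] that by (auto simp: vec_eq_iff hess_y_dtt_def hess_y_dt_def)
  have dy_c_zero: "partial c (dir_y k) z = 0" if z: "z \<in> I \<times> V" for k z
  proof (rule full_rank_proportional_columns_zero[where M = "hess_y_dt psi z"
        and a = "\<lambda>k. partial c (dir_y k) z"])
    show "rank (hess_y_dt psi z) = CARD('n)"
      using rank z by (cases z) simp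
    show "partial c (dir_y l) z * hess_y_dt psi z $ i $ j =
        partial c (dir_y j) z * hess_y_dt psi z $ i $ l" for i j l
      using coefficient_partials_symmetric[OF psi_smooth S dir_t_in_Basis dir_y_in_Basis
          dir_y_in_Basis dir_y_in_Basis c_diff eq_partials eq_partials z]
      by (simp add: hess_y_dt_def)
  qed (rule d)
  have const: "c (t, y) = c (t, y')" if "t \<in> I" "y \<in> V" "y' \<in> V" for t y y'
    using eq_if_dir_y_partials_zero[OF V, of c t y y'] c_diff dy_c_zero that by simp
  show ?thesis
  proof (intro exI ballI)
    fix t y
    assume "t \<in> I" "y \<in> V"
    then show "c (t, y) = c (t, SOME y. y \<in> V)"
      using const someI[of "\<lambda>y. y \<in> V"] by blast
  qed
qed

end
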